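(* Let $K\ge 1$ and let $H\in\mathbb{C}^{K\times K}$ be of the form $H = D + uv^T$, where $D\in\mathbb{C}^{K\times K}$ is an invertible diagonal matrix and $u,v\in\mathbb{C}^{K\times 1}$ are column vectors all of whose components are nonzero. Suppose $$\alpha := 3 + 3\,v^TD^{-1}u + (v^TD^{-1}u)^2 \neq 1.$$ Then there exist diagonal matrices $D_1,D_2,D_3\in\mathbb{C}^{K\times K}$ such that the matrix $HD_2 + HD_3 H^T D_1 H$ is diagonal and every one of its diagonal entries is nonzero.
   Context: This is the condition for a three-phase interactive scheme on a $K$-user interference channel with forward channel matrix $H$ and reciprocal feedback channel $G=H^T$: in phase 1 sources send $x$ and destinations receive $Hx$; in phase 2 destinations send $D_1 y$ back and sources receive $H^T D_1 y$; in phase 3 sources send $D_2 x + D_3 f$, so destinations receive $(HD_2+HD_3H^TD_1H)x$ (noise ignored). The coding matrices $D_1,D_2,D_3$ must be diagonal since each node only codes over its own signals. The conclusion means each destination $t_i$ receives its desired symbol $x_i$ free of interference after two forward and one reverse transmissions. *)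

theory Defs
  imports "HOL-Analysis.Analysis"
begin

definition is_diag_mat :: "complex ^'n ^'n \<Rightarrow> bool" where
  "is_diag_mat A \<longleftrightarrow> (\<forall>i j. i \<noteq> j \<longrightarrow> A $ i $ j = 0)"

definition outer_prod :: "complex ^'n \<Rightarrow> complex ^'m \<Rightarrow> complex ^'m ^'n" where
  "outer_prod u v = (\<chi> i j. u $ i * v $ j)"

definition bdot :: "complex ^'n \<Rightarrow> complex ^'n \<Rightarrow> complex" where
  "bdot v w = (\<Sum>i\<in>UNIV. v $ i * w $ i)"

end

theory Submission
  imports Defs
begin

text \<open>
  Write \<open>w = D\<^sup>-\<^sup>1 u\<close> and \<open>s = v\<^sup>T w\<close>; the hypothesis on \<open>\<alpha>\<close> says exactly
  \<open>(1 + s)(2 + s) \<noteq> 0\<close>. By Sherman--Morrison, \<open>P = I - w v\<^sup>T / (1 + s)\<close> satisfies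
  \<open>H P = D\<close>, so it suffices to make \<open>D\<^sub>2 + D\<^sub>3 H\<^sup>T D\<^sub>1 H\<close> equal to \<open>P\<close>.
  For \<open>D\<^sub>1 = diag (v\<^sub>k / (d\<^sub>k u\<^sub>k))\<close> one gets
  \<open>H\<^sup>T D\<^sub>1 H = D D\<^sub>1 D + (2 + s) v v\<^sup>T\<close>, whose off-diagonal entries \<open>(2 + s) v\<^sub>i v\<^sub>j\<close>
  differ from those of \<open>P\<close>, namely \<open>-w\<^sub>i v\<^sub>j / (1 + s)\<close>, only by a factor depending on the
  row \<open>i\<close>. That factor is absorbed by \<open>D\<^sub>3\<close>, and \<open>D\<^sub>2\<close> then corrects the diagonal.
\<close>

lemma invertible_matrix_inv_right: "invertible A \<Longrightarrow> A ** matrix_inv A = mat 1"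
  unfolding invertible_def matrix_inv_def by (rule someI2_ex) auto

lemma transpose_add: "transpose (A + B) = transpose A + transpose B"
  by (simp add: transpose_def vec_eq_iff)

lemma matrix_add_rdistrib: "(A + B) ** C = A ** C + B ** C"
  by (simp add: matrix_matrix_mult_def vec_eq_iff distrib_right sum.distrib)

lemma matrix_diff_ldistrib:
  fixes A :: "'a::comm_ring_1 ^'n ^'m"
  shows "A ** (B - C) = A ** B - A ** C"
  by (simp add: matrix_matrix_mult_def vec_eq_iff algebra_simps sum_subtractf)

definition diag_mat :: "('n \<Rightarrow> complex) \<Rightarrow> complex ^'n ^'n" where
  "diag_mat a = (\<chi> i j. if i = j then a i else 0)"

lemma is_diag_mat_diag_mat [simp]: "is_diag_mat (diag_mat a)"
  by (simp add: is_diag_mat_def diag_mat_def)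

lemma diag_mat_diag [simp]: "diag_mat a $ i $ i = a i"
  by (simp add: diag_mat_def)

lemma is_diag_mat_mult_left:
  assumes "is_diag_mat A"
  shows "(A ** B) $ i $ j = A $ i $ i * B $ i $ j"
proof -
  have "(A ** B) $ i $ j = (\<Sum>k\<in>UNIV. if k = i then A $ i $ i * B $ k $ j else 0)"
    unfolding matrix_matrix_mult_def vec_lambda_beta
    by (rule sum.cong) (use assms in \<open>auto simp: is_diag_mat_def\<close>)
  then show ?thesis by simp
qed

lemma is_diag_mat_mult_right:
  assumes "is_diag_mat A"
  shows "(B ** A) $ i $ j = B $ i $ j * A $ j $ j"
proof -
  have "(B ** A) $ i $ j = (\<Sum>k\<in>UNIV. if k = j then B $ i $ k * A $ j $ j else 0)"
    unfolding matrix_matrix_mult_def vec_lambda_beta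
    by (rule sum.cong) (use assms in \<open>auto simp: is_diag_mat_def\<close>)
  then show ?thesis by simp
qed

lemma is_diag_mat_mult_vector:
  assumes "is_diag_mat A"
  shows "(A *v x) $ i = A $ i $ i * x $ i"
proof -
  have "(A *v x) $ i = (\<Sum>k\<in>UNIV. if k = i then A $ i $ i * x $ k else 0)"
    unfolding matrix_vector_mult_def vec_lambda_beta
    by (rule sum.cong) (use assms in \<open>auto simp: is_diag_mat_def\<close>)
  then show ?thesis by simp
qed

lemma is_diag_mat_transpose: "is_diag_mat A \<Longrightarrow> transpose A = A"
  unfolding is_diag_mat_def transpose_def vec_eq_iff by (metis vec_lambda_beta)

lemma is_diag_mat_invertible_diag_nonzero:
  assumes "is_diag_mat A" and "invertible A"
  shows "A $ i $ i \<noteq> 0"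
proof
  assume "A $ i $ i = 0"
  obtain B where "A ** B = mat 1"
    using assms(2) unfolding invertible_def by blast
  then have "(A ** B) $ i $ i = 1" by (simp add: mat_def)
  with \<open>A $ i $ i = 0\<close> show False
    by (simp add: is_diag_mat_mult_left[OF assms(1)])
qed

lemma diagonal_correction:
  fixes N P :: "complex ^'n ^'n"
  assumes "\<And>i j. i \<noteq> j \<Longrightarrow> P $ i $ j = a i * N $ i $ j"
  shows "diag_mat (\<lambda>i. P $ i $ i - a i * N $ i $ i) + diag_mat a ** N = P"
proof -
  have "(diag_mat a ** N) $ i $ j = a i * N $ i $ j" for i j
    by (simp add: is_diag_mat_mult_left)
  then show ?thesis
    using assms by (auto simp: vec_eq_iff diag_mat_def)
qed

lemma transpose_outer_prod: "transpose (outer_prod u v) = outer_prod v u"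
  by (simp add: transpose_def outer_prod_def vec_eq_iff)

lemma outer_prod_add_left: "outer_prod (a + b) v = outer_prod a v + outer_prod b v"
  by (simp add: outer_prod_def vec_eq_iff distrib_right)

lemma matrix_mult_outer_prod: "A ** outer_prod u v = outer_prod (A *v u) v"
  by (simp add: matrix_matrix_mult_def matrix_vector_mult_def outer_prod_def vec_eq_iff
      sum_distrib_right mult.assoc)

lemma outer_prod_mult: "outer_prod u v ** A = outer_prod u (v v* A)"
  by (simp add: matrix_matrix_mult_def matrix_vector_mult_def outer_prod_def vector_matrix_mult_def
      vec_eq_iff sum_distrib_left mult_ac)

lemma outer_prod_mult_vector: "outer_prod a b *v c = bdot b c *s a"
  by (simp add: matrix_vector_mult_def outer_prod_def bdot_def vec_eq_iff
      sum_distrib_left mult_ac)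

lemma bdot_commute: "bdot v w = bdot w v"
  by (simp add: bdot_def mult.commute)

lemma bdot_scale_right: "bdot v (c *s w) = c * bdot v w"
  by (simp add: bdot_def sum_distrib_left mult_ac)

lemma sherman_morrison_mult:
  fixes D :: "complex ^'n ^'n"
  assumes "D *v w = u" and "1 + bdot v w \<noteq> 0"
  shows "(D + outer_prod u v) ** (mat 1 - outer_prod ((1 / (1 + bdot v w)) *s w) v) = D"
proof -
  define c where "c = 1 / (1 + bdot v w)"
  have "D ** outer_prod (c *s w) v = outer_prod (c *s u) v"
    by (simp add: matrix_mult_outer_prod vector_scalar_commute assms(1))
  moreover have "outer_prod u v ** outer_prod (c *s w) v = outer_prod ((c * bdot v w) *s u) v"
    by (simp add: matrix_mult_outer_prod outer_prod_mult_vector bdot_scale_right)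
  moreover have "outer_prod (c *s u) v + outer_prod ((c * bdot v w) *s u) v = outer_prod u v"
  proof -
    have "c + c * bdot v w = 1"
      using assms(2) by (simp add: c_def field_simps)
    then show ?thesis
      by (metis outer_prod_add_left vector_sadd_rdistrib vector_smult_lid)
  qed
  ultimately have "(D + outer_prod u v) ** (mat 1 - outer_prod (c *s w) v) = D"
    unfolding matrix_diff_ldistrib matrix_add_rdistrib by simp
  then show ?thesis
    unfolding c_def .
qed

lemma transpose_rank_one_update_congruence:
  fixes D E :: "complex ^'n ^'n"
  assumes "is_diag_mat D" and "is_diag_mat E" and "D ** E *v u = v"
  shows "transpose (D + outer_prod u v) ** E ** (D + outer_prod u v)
         = D ** E ** D + outer_prod ((2 + bdot u (E *v u)) *s v) v"
proof -
  have "u v* E = E *v u"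
    by (metis assms(2) is_diag_mat_transpose transpose_matrix_vector)
  have "(E *v u) v* D = v"
    by (metis assms \<open>u v* E = E *v u\<close> is_diag_mat_transpose matrix_transpose_mul
        transpose_matrix_vector vector_matrix_mul_assoc)
  have "transpose (D + outer_prod u v) ** E = D ** E + outer_prod v (E *v u)"
    by (simp add: transpose_add transpose_outer_prod is_diag_mat_transpose[OF assms(1)]
        matrix_add_rdistrib outer_prod_mult \<open>u v* E = E *v u\<close>)
  also have "\<dots> ** (D + outer_prod u v)
      = D ** E ** D + outer_prod v v + outer_prod v v + outer_prod (bdot u (E *v u) *s v) v"
    unfolding matrix_add_ldistrib matrix_add_rdistrib
    by (simp add: matrix_mult_outer_prod outer_prod_mult outer_prod_mult_vector assms(3)
        \<open>(E *v u) v* D = v\<close> bdot_commute add.assoc)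
  finally show ?thesis
    by (simp add: vec_eq_iff outer_prod_def algebra_simps)
qed

lemma rank_one_update_congruence_off_diag:
  fixes D :: "complex ^'n ^'n"
  assumes "is_diag_mat D" and "\<And>k. D $ k $ k \<noteq> 0" and "\<And>k. u $ k \<noteq> 0"
    and "D *v w = u" and "i \<noteq> j"
  shows "(transpose (D + outer_prod u v) ** diag_mat (\<lambda>k. v $ k / (D $ k $ k * u $ k))
           ** (D + outer_prod u v)) $ i $ j = (2 + bdot v w) * v $ i * v $ j"
proof -
  define E where "E = diag_mat (\<lambda>k. v $ k / (D $ k $ k * u $ k))"
  have "is_diag_mat E"
    by (simp add: E_def)
  have DEu: "D ** E *v u = v"
    using assms(2,3)
    by (simp add: vec_eq_iff E_def is_diag_mat_mult_vector[OF assms(1)]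
        is_diag_mat_mult_vector[OF is_diag_mat_diag_mat] flip: matrix_vector_mul_assoc)
  moreover have "bdot u (E *v u) = bdot v w"
  proof -
    have "w $ k = u $ k / D $ k $ k" for k
      using assms(2,4) by (auto simp: is_diag_mat_mult_vector[OF assms(1)] field_simps)
    then show ?thesis
      using assms(2,3) unfolding bdot_def
      by (intro sum.cong) (auto simp: E_def is_diag_mat_mult_vector[OF is_diag_mat_diag_mat])
  qed
  moreover have "(D ** E ** D) $ i $ j = 0"
    using assms(5)
    by (simp add: E_def is_diag_mat_mult_right[OF assms(1)] is_diag_mat_mult_left[OF assms(1)]
        diag_mat_def)
  ultimately show ?thesis
    unfolding E_def[symmetric]
    transpose_rank_one_update_congruence[OF assms(1) \<open>is_diag_mat E\<close> DEu]
    by (simp add: outer_prod_def algebra_simps)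
qed

lemma rank_one_update_two_round_diagonalization:
  fixes D :: "complex ^'n ^'n"
  assumes "is_diag_mat D" and "\<And>k. D $ k $ k \<noteq> 0"
    and "\<And>k. u $ k \<noteq> 0" and "\<And>k. v $ k \<noteq> 0"
    and "D *v w = u" and "1 + bdot v w \<noteq> 0" and "2 + bdot v w \<noteq> 0"
    and "H = D + outer_prod u v"
  shows "\<exists>D1 D2 D3. is_diag_mat D1 \<and> is_diag_mat D2 \<and> is_diag_mat D3 \<and>
           H ** D2 + H ** D3 ** transpose H ** D1 ** H = D"
proof -
  define D1 where "D1 = diag_mat (\<lambda>k. v $ k / (D $ k $ k * u $ k))"
  define N where "N = transpose H ** D1 ** H"
  define P where "P = mat 1 - outer_prod ((1 / (1 + bdot v w)) *s w) v"
  define a where "a i = - w $ i / (1 + bdot v w) / ((2 + bdot v w) * v $ i)" for i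
  define D2 where "D2 = diag_mat (\<lambda>i. P $ i $ i - a i * N $ i $ i)"
  define D3 where "D3 = diag_mat a"
  have "P $ i $ j = a i * N $ i $ j" if "i \<noteq> j" for i j
  proof -
    have N_ij: "N $ i $ j = (2 + bdot v w) * v $ i * v $ j"
      using rank_one_update_congruence_off_diag[OF assms(1,2,3,5) that]
      by (simp add: N_def D1_def assms(8))
    have P_ij: "P $ i $ j = - w $ i * v $ j / (1 + bdot v w)"
      using that by (simp add: P_def outer_prod_def mat_def)
    show ?thesis
      unfolding N_ij P_ij using assms(4,7) by (simp add: a_def)
  qed
  then have "D2 + D3 ** N = P"
    unfolding D2_def D3_def by (rule diagonal_correction)
  have "H ** D2 + H ** D3 ** transpose H ** D1 ** H = H ** P"
    by (simp add: N_def matrix_add_ldistrib matrix_mul_assoc flip: \<open>D2 + D3 ** N = P\<close>)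
  also have "\<dots> = D"
    unfolding P_def assms(8) using assms(5,6) by (rule sherman_morrison_mult)
  finally show ?thesis
    unfolding D1_def D2_def D3_def using is_diag_mat_diag_mat by blast
qed

theorem theorem1:
  fixes H D :: "complex ^'n ^'n" and u v :: "complex ^'n"
  assumes "is_diag_mat D" and "invertible D"
    and "\<forall>i. u $ i \<noteq> 0" and "\<forall>i. v $ i \<noteq> 0"
    and "H = D + outer_prod u v"
    and "3 + 3 * bdot v (matrix_inv D *v u) + bdot v (matrix_inv D *v u)^2 \<noteq> 1"
  shows "\<exists>D1 D2 D3 :: complex ^'n ^'n. is_diag_mat D1 \<and> is_diag_mat D2 \<and> is_diag_mat D3 \<and>
           is_diag_mat (H ** D2 + H ** D3 ** transpose H ** D1 ** H) \<and>
           (\<forall>i. (H ** D2 + H ** D3 ** transpose H ** D1 ** H) $ i $ i \<noteq> 0)"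
proof -
  define w where "w = matrix_inv D *v u"
  have "D *v w = u"
    using assms(2) by (simp add: w_def matrix_vector_mul_assoc invertible_matrix_inv_right)
  have D_nonzero: "D $ k $ k \<noteq> 0" for k
    using assms(1,2) by (rule is_diag_mat_invertible_diag_nonzero)
  have "(1 + bdot v w) * (2 + bdot v w) \<noteq> 0"
    using assms(6) by (simp add: w_def algebra_simps power2_eq_square)
  then obtain D1 D2 D3 where "is_diag_mat D1" "is_diag_mat D2" "is_diag_mat D3"
    and "H ** D2 + H ** D3 ** transpose H ** D1 ** H = D"
    using rank_one_update_two_round_diagonalization[OF assms(1) D_nonzero _ _ \<open>D *v w = u\<close>]
      assms(3,4,5) by force
  then show ?thesis
    using assms(1) D_nonzero by blast
qed

end
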